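(* Let $G=(V,E,w)$ be a connected undirected graph with positive edge weights, $|V|=n$, and weighted Laplacian $\mathbf{L}$. Let $v\in V$ and let $e=\{u,v\}\notin E$, $u\neq v$, be a candidate edge with given weight $w(e)>0$, and set $\mathbf{b}_e=\mathbf{e}_u-\mathbf{e}_v$ (either orientation). Let $\mathcal{R}_v^\Delta(e)=\mathcal{R}_v(G)-\mathcal{R}_v(G+e)$, where $G+e$ is $G$ with edge $e$ of weight $w(e)$ added. Then $$\mathcal{R}_v^\Delta(e)=\frac{w(e)\left(n\left(\mathbf{L}^\dagger\mathbf{b}_e\mathbf{b}_e^\top\mathbf{L}^\dagger\right)_{vv}+\operatorname{Tr}\left(\mathbf{L}^\dagger\mathbf{b}_e\mathbf{b}_e^\top\mathbf{L}^\dagger\right)\right)}{1+w(e)\,\mathbf{b}_e^\top\mathbf{L}^\dagger\mathbf{b}_e}.$$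
   Context: The Laplacian of a weighted graph is $\mathbf{L}=\mathbf{D}-\mathbf{A}$ with $\mathbf{A}$ the weighted adjacency matrix and $\mathbf{D}$ the diagonal weighted degree matrix; $\mathbf{L}^\dagger$ is its Moore–Penrose pseudoinverse; $\mathbf{e}_i$ are standard basis vectors. The resistance distance between nodes $a,b$ is $\mathcal{R}_{ab}=(\mathbf{e}_a-\mathbf{e}_b)^\top\mathbf{L}^\dagger(\mathbf{e}_a-\mathbf{e}_b)$, and the resistance distance of node $v$ in a graph is $\mathcal{R}_v=\sum_{u\in V}\mathcal{R}_{uv}$. *)

theory Defs
  imports "HOL-Analysis.Analysis"
begin

definition weighted_graph :: "('n::finite \<Rightarrow> 'n \<Rightarrow> real) \<Rightarrow> bool" where
  "weighted_graph w \<longleftrightarrow> (\<forall>x y. w x y = w y x) \<and> (\<forall>x y. w x y \<ge> 0) \<and> (\<forall>x. w x x = 0)"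

definition edges :: "('n \<Rightarrow> 'n \<Rightarrow> real) \<Rightarrow> ('n \<times> 'n) set" where
  "edges w = {(x, y). w x y > 0}"

definition connected_graph :: "('n::finite \<Rightarrow> 'n \<Rightarrow> real) \<Rightarrow> bool" where
  "connected_graph w \<longleftrightarrow> (\<forall>x y. (x, y) \<in> (edges w)\<^sup>*)"

definition adj_matrix :: "('n::finite \<Rightarrow> 'n \<Rightarrow> real) \<Rightarrow> real^'n^'n" where
  "adj_matrix w = (\<chi> i j. w i j)"

definition deg_matrix :: "('n::finite \<Rightarrow> 'n \<Rightarrow> real) \<Rightarrow> real^'n^'n" where
  "deg_matrix w = (\<chi> i j. if i = j then (\<Sum>k\<in>UNIV. w i k) else 0)"

definition laplacian :: "('n::finite \<Rightarrow> 'n \<Rightarrow> real) \<Rightarrow> real^'n^'n" where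
  "laplacian w = deg_matrix w - adj_matrix w"

definition pinv :: "real^'n^'m \<Rightarrow> real^'m^'n" where
  "pinv A = (THE X. A ** X ** A = A \<and> X ** A ** X = X \<and>
                    transpose (A ** X) = A ** X \<and> transpose (X ** A) = X ** A)"

definition std_basis :: "'n::finite \<Rightarrow> real^'n" where
  "std_basis i = axis i 1"

definition outer :: "real^'n \<Rightarrow> real^'m \<Rightarrow> real^'m^'n" where
  "outer x y = (\<chi> i j. x $ i * y $ j)"

definition resistance :: "('n::finite \<Rightarrow> 'n \<Rightarrow> real) \<Rightarrow> 'n \<Rightarrow> 'n \<Rightarrow> real" where
  "resistance w a b = (std_basis a - std_basis b) \<bullet>
       (pinv (laplacian w) *v (std_basis a - std_basis b))"

definition node_resistance :: "('n::finite \<Rightarrow> 'n \<Rightarrow> real) \<Rightarrow> 'n \<Rightarrow> real" where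
  "node_resistance w v = (\<Sum>u\<in>UNIV. resistance w u v)"

definition add_edge :: "('n \<Rightarrow> 'n \<Rightarrow> real) \<Rightarrow> 'n \<Rightarrow> 'n \<Rightarrow> real \<Rightarrow> ('n \<Rightarrow> 'n \<Rightarrow> real)" where
  "add_edge w u v c = (\<lambda>x y. if (x = u \<and> y = v) \<or> (x = v \<and> y = u) then c else w x y)"

end

theory Submission imports Defs begin

text \<open>On a connected graph the kernel of \<open>L\<close> consists of the constant vectors, so
\<open>L\<^sup>\<dagger>\<close> inverts \<open>L\<close> on the orthogonal complement of \<open>\<one>\<close>: \<open>L L\<^sup>\<dagger> = L\<^sup>\<dagger> L = P\<close>
with the centering projection \<open>P = I - J/n\<close>. Adding the edge gives the rank-one update
\<open>L + c b b\<^sup>T\<close> with \<open>b \<bottom> \<one>\<close>, and the Sherman--Morrison formula carries over verbatim to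
pseudoinverses relative to \<open>P\<close>:
\<open>(L + c b b\<^sup>T)\<^sup>\<dagger> = L\<^sup>\<dagger> - c L\<^sup>\<dagger> b b\<^sup>T L\<^sup>\<dagger> / (1 + c b\<^sup>T L\<^sup>\<dagger> b)\<close>.
Since \<open>L\<^sup>\<dagger>\<close> is symmetric with zero column sums, \<open>\<R>\<^sub>v = Tr L\<^sup>\<dagger> + n (L\<^sup>\<dagger>)\<^sub>v\<^sub>v\<close>,
which is linear in \<open>L\<^sup>\<dagger>\<close>; subtracting the two instances yields the formula.\<close>

lemma penrose_conditions_unique:
  fixes A :: "real^'n^'m" and X Y :: "real^'m^'n"
  assumes x1: "A ** X ** A = A" and x2: "X ** A ** X = X"
    and x3: "transpose (A ** X) = A ** X" and x4: "transpose (X ** A) = X ** A"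
    and y1: "A ** Y ** A = A" and y2: "Y ** A ** Y = Y"
    and y3: "transpose (A ** Y) = A ** Y" and y4: "transpose (Y ** A) = Y ** A"
  shows "X = Y"
proof -
  have AX: "A ** X = A ** Y"
  proof -
    have "A ** X = transpose X ** transpose A" using x3 by (simp add: matrix_transpose_mul)
    also have "\<dots> = transpose X ** (transpose A ** transpose Y ** transpose A)"
      using y1 by (metis matrix_transpose_mul matrix_mul_assoc)
    also have "\<dots> = transpose (A ** X) ** transpose (A ** Y)"
      by (simp add: matrix_transpose_mul matrix_mul_assoc)
    also have "\<dots> = (A ** X ** A) ** Y" using x3 y3 by (simp add: matrix_mul_assoc)
    finally show ?thesis using x1 by simp
  qed
  have XA: "X ** A = Y ** A"
  proof -
    have "X ** A = transpose A ** transpose X" using x4 by (simp add: matrix_transpose_mul)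
    also have "\<dots> = (transpose A ** transpose Y ** transpose A) ** transpose X"
      using y1 by (metis matrix_transpose_mul matrix_mul_assoc)
    also have "\<dots> = transpose (Y ** A) ** transpose (X ** A)"
      by (simp add: matrix_transpose_mul matrix_mul_assoc)
    also have "\<dots> = Y ** (A ** X ** A)" using x4 y4 by (simp add: matrix_mul_assoc)
    finally show ?thesis using x1 by simp
  qed
  have "X = X ** (A ** Y)" using x2 AX by (metis matrix_mul_assoc)
  also have "\<dots> = Y ** A ** Y" using XA by (simp add: matrix_mul_assoc)
  finally show ?thesis using y2 by simp
qed

lemma pinv_eqI:
  fixes A :: "real^'n^'m" and X :: "real^'m^'n"
  assumes "A ** X ** A = A" and "X ** A ** X = X"
    and "transpose (A ** X) = A ** X" and "transpose (X ** A) = X ** A"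
  shows "pinv A = X"
  unfolding pinv_def
  using assms penrose_conditions_unique by (intro the_equality) blast+

lemma pinv_eqI_projection:
  fixes A X P :: "real^'n^'n"
  assumes "A ** X = P" "X ** A = P" "P ** A = A" "P ** X = X" "transpose P = P"
  shows "pinv A = X"
  using assms by (intro pinv_eqI) (simp_all flip: matrix_mul_assoc)

lemma matrix_diff_ldistrib: "(A::real^'n^'m) ** (B - C) = A ** B - A ** C"
  by (simp add: matrix_matrix_mult_def vec_eq_iff sum_subtractf algebra_simps)

lemma matrix_diff_rdistrib: "((A::real^'n^'m) - B) ** C = A ** C - B ** C"
  by (simp add: matrix_matrix_mult_def vec_eq_iff sum_subtractf algebra_simps)

lemma matrix_add_rdistrib: "((A::real^'n^'m) + B) ** C = A ** C + B ** C"
  by (simp add: matrix_matrix_mult_def vec_eq_iff sum.distrib algebra_simps)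

lemma matrix_scaleR_left: "(k *\<^sub>R (A::real^'n^'m)) ** C = k *\<^sub>R (A ** C)"
  by (simp add: scalar_matrix_assoc)

lemma matrix_scaleR_right: "(A::real^'n^'m) ** (k *\<^sub>R C) = k *\<^sub>R (A ** C)"
  by (simp add: matrix_scalar_ac scalar_matrix_assoc)

lemmas matrix_arith_simps = matrix_add_ldistrib matrix_add_rdistrib
  matrix_diff_ldistrib matrix_diff_rdistrib matrix_scaleR_left matrix_scaleR_right

lemma transpose_add: "transpose ((A::real^'n^'m) + B) = transpose A + transpose B"
  by (simp add: transpose_def vec_eq_iff)

lemma transpose_diff: "transpose ((A::real^'n^'m) - B) = transpose A - transpose B"
  by (simp add: transpose_def vec_eq_iff)

lemma trace_scaleR: "trace (k *\<^sub>R (A::real^'n^'n)) = k * trace A"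
  by (simp add: trace_def sum_distrib_left)

lemma matrix_mult_outer: "P ** outer a b = outer (P *v a) b"
  by (simp add: vec_eq_iff outer_def matrix_matrix_mult_def matrix_vector_mult_def
      sum_distrib_right mult.assoc)

lemma outer_mult_matrix: "outer a b ** P = outer a (transpose P *v b)"
  by (simp add: vec_eq_iff outer_def matrix_matrix_mult_def matrix_vector_mult_def transpose_def
      sum_distrib_left mult_ac)

lemma outer_mult_outer: "outer a b ** X ** outer c d = (b \<bullet> (X *v c)) *\<^sub>R outer a d"
  apply (simp add: vec_eq_iff outer_def matrix_matrix_mult_def inner_vec_def
      matrix_vector_mult_def sum_distrib_left sum_distrib_right algebra_simps)
  by (intro allI, subst sum.swap) (simp add: mult_ac)

lemma pinv_rank_one_update:
  fixes A X P :: "real^'n^'n" and b :: "real^'n" and c :: real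
  assumes AX: "A ** X = P" and XA: "X ** A = P" and PA: "P ** A = A" and PX: "P ** X = X"
    and tP: "transpose P = P" and Pb: "P *v b = b"
    and nz: "1 + c * (b \<bullet> (X *v b)) \<noteq> 0"
  shows "pinv (A + c *\<^sub>R outer b b)
           = X - (c / (1 + c * (b \<bullet> (X *v b)))) *\<^sub>R (X ** outer b b ** X)"
proof -
  define s where "s = b \<bullet> (X *v b)"
  define k where "k = c / (1 + c * s)"
  define B where "B = outer b b"
  have "k * (1 + c * s) = c" using nz by (simp add: k_def s_def)
  then have k: "k + c * k * s = c" by (simp add: algebra_simps)
  have PB: "P ** B = B" and BP: "B ** P = B"
    by (simp_all add: B_def matrix_mult_outer outer_mult_matrix tP Pb)
  have BXB: "B ** X ** B = s *\<^sub>R B" by (simp add: B_def s_def outer_mult_outer)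
  then have XBXB: "X ** B ** X ** B = s *\<^sub>R (X ** B)"
    by (metis matrix_mul_assoc matrix_scaleR_right)
  have XBXA: "X ** B ** X ** A = X ** B" using XA BP by (metis matrix_mul_assoc)
  have "(A + c *\<^sub>R B) ** (X - k *\<^sub>R (X ** B ** X)) = P + (c - (k + c * k * s)) *\<^sub>R (B ** X)"
    by (simp add: matrix_arith_simps matrix_mul_assoc AX PB BXB algebra_simps)
  moreover have "(X - k *\<^sub>R (X ** B ** X)) ** (A + c *\<^sub>R B) = P + (c - (k + c * k * s)) *\<^sub>R (X ** B)"
    by (simp add: matrix_arith_simps matrix_mul_assoc XA XBXA XBXB algebra_simps)
  moreover have "P ** (A + c *\<^sub>R B) = A + c *\<^sub>R B" by (simp add: matrix_arith_simps PA PB)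
  moreover have "P ** (X - k *\<^sub>R (X ** B ** X)) = X - k *\<^sub>R (X ** B ** X)"
    by (simp add: matrix_arith_simps matrix_mul_assoc PX)
  ultimately have "pinv (A + c *\<^sub>R B) = X - k *\<^sub>R (X ** B ** X)"
    using k tP by (intro pinv_eqI_projection) simp_all
  then show ?thesis by (simp add: B_def k_def s_def)
qed

definition ones_mat :: "real^'n::finite^'n" where
  "ones_mat = (\<chi> i j. 1)"

definition centering_mat :: "real^'n::finite^'n" where
  "centering_mat = mat 1 - (1 / real CARD('n)) *\<^sub>R ones_mat"

lemma transpose_ones_mat [simp]: "transpose ones_mat = ones_mat"
  by (simp add: vec_eq_iff ones_mat_def transpose_def)

lemma ones_mat_mult_ones_mat:
  "(ones_mat :: real^'n::finite^'n) ** ones_mat = real CARD('n) *\<^sub>R ones_mat"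
  by (simp add: vec_eq_iff ones_mat_def matrix_matrix_mult_def)

lemma transpose_centering_mat: "transpose centering_mat = centering_mat"
  by (simp add: centering_mat_def transpose_diff transpose_scalar)

lemma centering_mat_mult: "ones_mat ** X = 0 \<Longrightarrow> centering_mat ** X = X"
  by (simp add: centering_mat_def matrix_arith_simps)

lemma centering_mat_mult_vec:
  assumes "(\<Sum>i\<in>UNIV. x $ i) = 0" shows "centering_mat *v x = x"
proof -
  have "ones_mat *v x = 0"
    using assms by (simp add: vec_eq_iff ones_mat_def matrix_vector_mult_def)
  then show ?thesis
    by (simp add: centering_mat_def matrix_vector_mult_diff_rdistrib flip: scaleR_matrix_vector_assoc)
qed

lemma laplacian_nth:
  "laplacian w $ i $ j = (if i = j then (\<Sum>k\<in>UNIV. w i k) else 0) - w i j"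
  by (simp add: laplacian_def deg_matrix_def adj_matrix_def)

lemma laplacian_mult_vec_nth:
  "(laplacian w *v x) $ i = (\<Sum>k\<in>UNIV. w i k) * x $ i - (\<Sum>j\<in>UNIV. w i j * x $ j)"
proof -
  have "(laplacian w *v x) $ i
      = (\<Sum>j\<in>UNIV. (if i = j then (\<Sum>k\<in>UNIV. w i k) * x $ j else 0) - w i j * x $ j)"
    by (auto simp add: matrix_vector_mult_def laplacian_nth left_diff_distrib intro!: sum.cong)
  then show ?thesis by (simp add: sum_subtractf)
qed

lemma transpose_laplacian:
  "weighted_graph w \<Longrightarrow> transpose (laplacian w) = laplacian w"
  by (simp add: vec_eq_iff transpose_def laplacian_nth weighted_graph_def)

lemma laplacian_mult_ones_mat: "laplacian w ** ones_mat = 0"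
  by (simp add: vec_eq_iff ones_mat_def matrix_matrix_mult_def laplacian_nth sum_subtractf)

lemma ones_mat_mult_laplacian:
  assumes "weighted_graph w" shows "ones_mat ** laplacian w = 0"
proof -
  have "ones_mat ** laplacian w = transpose (laplacian w ** ones_mat)"
    using assms by (simp add: matrix_transpose_mul transpose_laplacian)
  then show ?thesis by (simp add: laplacian_mult_ones_mat transpose_def vec_eq_iff)
qed

lemma laplacian_quadratic_form:
  assumes "weighted_graph w"
  shows "x \<bullet> (laplacian w *v x) = (\<Sum>i\<in>UNIV. \<Sum>j\<in>UNIV. w i j * (x$i - x$j)^2) / 2"
proof -
  have lhs: "x \<bullet> (laplacian w *v x) = (\<Sum>i\<in>UNIV. \<Sum>j\<in>UNIV. w i j * (x$i * (x$i - x$j)))"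
    by (simp add: inner_vec_def laplacian_mult_vec_nth sum_distrib_left sum_distrib_right
        sum_subtractf algebra_simps)
  have "(\<Sum>i\<in>UNIV. \<Sum>j\<in>UNIV. w i j * (x$i * (x$i - x$j)))
      = (\<Sum>j\<in>UNIV. \<Sum>i\<in>UNIV. w i j * (x$i * (x$i - x$j)))"
    by (rule sum.swap)
  also have "\<dots> = (\<Sum>i\<in>UNIV. \<Sum>j\<in>UNIV. w i j * (x$j * (x$j - x$i)))"
    using assms by (simp add: weighted_graph_def)
  finally have swap: "(\<Sum>i\<in>UNIV. \<Sum>j\<in>UNIV. w i j * (x$i * (x$i - x$j)))
      = (\<Sum>i\<in>UNIV. \<Sum>j\<in>UNIV. w i j * (x$j * (x$j - x$i)))" .
  have "(\<Sum>i\<in>UNIV. \<Sum>j\<in>UNIV. w i j * (x$i - x$j)^2)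
     = (\<Sum>i\<in>UNIV. \<Sum>j\<in>UNIV. w i j * (x$i * (x$i - x$j)))
       + (\<Sum>i\<in>UNIV. \<Sum>j\<in>UNIV. w i j * (x$j * (x$j - x$i)))"
    by (simp add: sum.distrib[symmetric] power2_eq_square algebra_simps)
  then show ?thesis using lhs swap by simp
qed

lemma laplacian_quadratic_form_nonneg:
  assumes "weighted_graph w" shows "x \<bullet> (laplacian w *v x) \<ge> 0"
  unfolding laplacian_quadratic_form[OF assms]
  using assms by (auto simp: weighted_graph_def intro!: sum_nonneg divide_nonneg_nonneg)

lemma laplacian_kernel_const:
  assumes wg: "weighted_graph w" and cg: "connected_graph w" and Lx: "laplacian w *v x = 0"
  shows "x $ a = x $ b"
proof -
  have nn: "\<And>i j. w i j * (x$i - x$j)^2 \<ge> 0" using wg by (simp add: weighted_graph_def)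
  have "(\<Sum>i\<in>UNIV. \<Sum>j\<in>UNIV. w i j * (x$i - x$j)^2) = 0"
    using laplacian_quadratic_form[OF wg, of x] Lx by simp
  then have zero: "w i j * (x$i - x$j)^2 = 0" for i j
    by (simp add: sum_nonneg_eq_0_iff sum_nonneg nn)
  have edge: "x $ i = x $ j" if "(i, j) \<in> edges w" for i j
  proof -
    have "w i j > 0" using that by (simp add: edges_def)
    then show ?thesis using zero[of i j] by simp
  qed
  have "(a, b) \<in> (edges w)\<^sup>*" using cg by (simp add: connected_graph_def)
  then show ?thesis
    by (induction rule: rtrancl_induct) (auto dest: edge)
qed

text \<open>Adding \<open>J/n\<close> fills the one-dimensional kernel of \<open>L\<close> without disturbing its
range, so \<open>L + J/n\<close> is invertible.\<close>

lemma laplacian_plus_ones_mat_invertible: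
  fixes w :: "'n::finite \<Rightarrow> 'n \<Rightarrow> real"
  assumes wg: "weighted_graph w" and cg: "connected_graph w"
  shows "\<exists>Z. Z ** (laplacian w + (1 / real CARD('n)) *\<^sub>R ones_mat) = mat 1"
proof -
  define n where "n = real CARD('n)"
  define M where "M = laplacian w + (1 / n) *\<^sub>R ones_mat"
  have JM: "ones_mat ** M = ones_mat"
    by (simp add: M_def n_def matrix_arith_simps ones_mat_mult_laplacian[OF wg]
        ones_mat_mult_ones_mat)
  have "x = 0" if Mx: "M *v x = 0" for x
  proof -
    have "ones_mat *v x = ones_mat *v (M *v x)"
      by (simp add: matrix_vector_mul_assoc JM)
    then have Jx: "ones_mat *v x = 0" using Mx by simp
    then have "laplacian w *v x = 0" using Mx
      by (simp add: M_def matrix_vector_mult_add_rdistrib flip: scaleR_matrix_vector_assoc)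
    then have const: "x $ i = x $ a" for i a by (rule laplacian_kernel_const[OF wg cg])
    have "n * x $ a = (ones_mat *v x) $ a" for a
    proof -
      have "(ones_mat *v x) $ a = (\<Sum>i\<in>UNIV. x $ i)"
        by (simp add: ones_mat_def matrix_vector_mult_def)
      also have "\<dots> = (\<Sum>i\<in>(UNIV :: 'n set). x $ a)" by (rule sum.cong[OF refl]) (rule const)
      finally show ?thesis by (simp add: n_def)
    qed
    then have "n * x $ a = 0" for a using Jx by simp
    then show ?thesis by (simp add: vec_eq_iff n_def)
  qed
  then show ?thesis by (simp add: M_def n_def matrix_left_invertible_ker)
qed

lemma pinv_laplacian:
  fixes w :: "'n::finite \<Rightarrow> 'n \<Rightarrow> real"
  assumes wg: "weighted_graph w" and cg: "connected_graph w"
  shows "laplacian w ** pinv (laplacian w) = centering_mat"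
    and "pinv (laplacian w) ** laplacian w = centering_mat"
    and "transpose (pinv (laplacian w)) = pinv (laplacian w)"
    and "ones_mat ** pinv (laplacian w) = 0"
proof -
  define n where "n = real CARD('n)"
  define L where "L = laplacian w"
  define M where "M = L + (1 / n) *\<^sub>R ones_mat"
  obtain Z where ZM: "Z ** M = mat 1"
    using laplacian_plus_ones_mat_invertible[OF wg cg] by (auto simp: M_def L_def n_def)
  then have MZ: "M ** Z = mat 1" using matrix_left_right_inverse by blast
  have JL: "ones_mat ** L = 0" and LJ: "L ** ones_mat = 0"
    by (simp_all add: L_def ones_mat_mult_laplacian[OF wg] laplacian_mult_ones_mat)
  have JJ: "ones_mat ** ones_mat = n *\<^sub>R (ones_mat :: real^'n^'n)"
    by (simp add: n_def ones_mat_mult_ones_mat)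
  have JM: "ones_mat ** M = ones_mat" and MJ: "M ** ones_mat = ones_mat"
    using JL LJ JJ by (simp_all add: M_def n_def matrix_arith_simps)
  have JZ: "ones_mat ** Z = ones_mat"
    using JM MZ by (metis matrix_mul_assoc matrix_mul_rid)
  have ZJ: "Z ** ones_mat = ones_mat"
    using MJ ZM by (metis matrix_mul_assoc matrix_mul_lid)
  have "transpose M = M"
    by (simp add: M_def L_def transpose_add transpose_scalar transpose_laplacian[OF wg])
  then have "transpose Z ** M = mat 1"
    using MZ by (metis matrix_transpose_mul transpose_mat)
  then have tZ: "transpose Z = Z"
    using MZ by (metis matrix_mul_assoc matrix_mul_lid matrix_mul_rid)
  define X where "X = Z - (1 / n) *\<^sub>R ones_mat"
  have LM: "L = M - (1 / n) *\<^sub>R ones_mat" by (simp add: M_def)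
  have LX: "L ** X = centering_mat"
    unfolding X_def centering_mat_def n_def[symmetric]
    by (simp add: matrix_arith_simps LJ) (simp add: LM matrix_arith_simps MZ JZ)
  have XL: "X ** L = centering_mat"
    unfolding X_def centering_mat_def n_def[symmetric]
    by (simp add: matrix_arith_simps JL) (simp add: LM matrix_arith_simps ZM ZJ)
  have JX: "ones_mat ** X = 0" by (simp add: X_def n_def matrix_arith_simps JZ JJ)
  have "pinv L = X"
    using LX XL JL JX transpose_centering_mat
    by (intro pinv_eqI_projection) (simp_all add: centering_mat_mult)
  moreover have "transpose X = X" by (simp add: X_def transpose_diff transpose_scalar tZ)
  ultimately show "L ** pinv L = centering_mat" "pinv L ** L = centering_mat"
    "transpose (pinv L) = pinv L" "ones_mat ** pinv L = 0"
    using LX XL JX by simp_all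
qed

lemma pinv_laplacian_nonneg:
  assumes wg: "weighted_graph w" and cg: "connected_graph w"
  shows "x \<bullet> (pinv (laplacian w) *v x) \<ge> 0"
proof -
  define X where "X = pinv (laplacian w)"
  have "X ** laplacian w ** X = X"
    using pinv_laplacian[OF wg cg] by (simp add: X_def centering_mat_mult)
  then have "x \<bullet> (X *v x) = x \<bullet> (X *v (laplacian w *v (X *v x)))"
    by (simp add: matrix_vector_mul_assoc matrix_mul_assoc)
  also have "\<dots> = (X *v x) \<bullet> (laplacian w *v (X *v x))"
    using pinv_laplacian(3)[OF wg cg, folded X_def]
    by (metis dot_lmul_matrix transpose_matrix_vector)
  also have "\<dots> \<ge> 0" by (rule laplacian_quadratic_form_nonneg[OF wg])
  finally show ?thesis by (simp add: X_def)
qed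

text \<open>The zero column sums of \<open>L\<^sup>\<dagger>\<close> kill the cross terms \<open>-2 (L\<^sup>\<dagger>)\<^sub>u\<^sub>v\<close>.\<close>

lemma node_resistance_eq:
  fixes w :: "'n::finite \<Rightarrow> 'n \<Rightarrow> real"
  assumes wg: "weighted_graph w" and cg: "connected_graph w"
  shows "node_resistance w v
           = trace (pinv (laplacian w)) + real CARD('n) * pinv (laplacian w) $ v $ v"
proof -
  define Y where "Y = pinv (laplacian w)"
  have entry: "std_basis a \<bullet> (Y *v std_basis b) = Y $ a $ b" for a b
    by (simp add: std_basis_def axis_def inner_vec_def matrix_vector_mult_def
        if_distrib if_distribR cong: if_cong)
  have "Y $ v $ a = transpose Y $ a $ v" for a by (simp add: transpose_def)
  then have sym: "Y $ v $ a = Y $ a $ v" for a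
    using pinv_laplacian(3)[OF wg cg, folded Y_def] by simp
  have res: "resistance w a v = Y $ a $ a + Y $ v $ v - 2 * Y $ a $ v" for a
    using sym[of a] unfolding resistance_def Y_def[symmetric]
    by (simp add: inner_diff_left inner_diff_right matrix_vector_mult_diff_distrib entry)
  have "(\<Sum>a\<in>UNIV. Y $ a $ v) = (ones_mat ** Y) $ v $ v"
    by (simp add: ones_mat_def matrix_matrix_mult_def)
  then have "(\<Sum>a\<in>UNIV. Y $ a $ v) = 0"
    using pinv_laplacian(4)[OF wg cg, folded Y_def] by simp
  then show ?thesis
    unfolding node_resistance_def res Y_def[symmetric]
    by (simp add: sum.distrib sum_subtractf trace_def flip: sum_distrib_left)
qed

lemma weighted_graph_add_edge:
  "weighted_graph w \<Longrightarrow> u \<noteq> v \<Longrightarrow> c \<ge> 0 \<Longrightarrow> weighted_graph (add_edge w u v c)"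
  by (auto simp: weighted_graph_def add_edge_def)

lemma connected_graph_add_edge:
  assumes "connected_graph w" and "c > 0"
  shows "connected_graph (add_edge w u v c)"
proof -
  have "edges w \<subseteq> edges (add_edge w u v c)"
    using assms(2) by (auto simp: edges_def add_edge_def)
  then show ?thesis
    using assms(1) rtrancl_mono unfolding connected_graph_def by blast
qed

lemma laplacian_add_edge:
  assumes wg: "weighted_graph w" and ne: "(u, v) \<notin> edges w" and uv: "u \<noteq> v"
  shows "laplacian (add_edge w u v c)
           = laplacian w + c *\<^sub>R outer (std_basis u - std_basis v) (std_basis u - std_basis v)"
proof -
  have "w u v = 0" "w v u = 0"
    using wg ne by (auto simp: weighted_graph_def edges_def not_less intro: antisym)
  then have entry: "add_edge w u v c i k
      = w i k + (if (i = u \<and> k = v) \<or> (i = v \<and> k = u) then c else 0)" for i k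
    by (auto simp: add_edge_def)
  have deg: "(\<Sum>k\<in>UNIV. add_edge w u v c i k)
      = (\<Sum>k\<in>UNIV. w i k) + (if i = u \<or> i = v then c else 0)" for i
    using uv by (simp add: entry sum.distrib)
  show ?thesis
    using uv by (simp add: vec_eq_iff laplacian_nth deg)
      (auto simp: outer_def std_basis_def axis_def entry)
qed

theorem lemma2:
  fixes w :: "'n::finite \<Rightarrow> 'n \<Rightarrow> real" and u v :: 'n and c :: real
  assumes "weighted_graph w" and "connected_graph w"
    and "u \<noteq> v" and "(u, v) \<notin> edges w" and "c > 0"
  shows "let L = laplacian w; b = std_basis u - std_basis v;
             M = pinv L ** outer b b ** pinv L
         in node_resistance w v - node_resistance (add_edge w u v c) v
            = c * (real CARD('n) * M $ v $ v + trace M) / (1 + c * (b \<bullet> (pinv L *v b)))"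
proof -
  note wg = assms(1) and cg = assms(2)
  define X where "X = pinv (laplacian w)"
  define b where "b = std_basis u - std_basis v"
  define s where "s = b \<bullet> (X *v b)"
  have "(\<Sum>i\<in>UNIV. b $ i) = 0" by (simp add: b_def std_basis_def axis_def sum_subtractf)
  then have Pb: "centering_mat *v b = b" by (rule centering_mat_mult_vec)
  have "s \<ge> 0" unfolding s_def X_def by (rule pinv_laplacian_nonneg[OF wg cg])
  then have "1 + c * s > 0" using \<open>c > 0\<close> by (simp add: add_pos_nonneg)
  then have nz: "1 + c * s \<noteq> 0" by simp
  have PL: "centering_mat ** laplacian w = laplacian w"
    by (rule centering_mat_mult[OF ones_mat_mult_laplacian[OF wg]])
  have upd: "pinv (laplacian (add_edge w u v c))
      = X - (c / (1 + c * s)) *\<^sub>R (X ** outer b b ** X)"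
    unfolding laplacian_add_edge[OF wg assms(4,3)] b_def[symmetric] s_def X_def
    by (rule pinv_rank_one_update[OF pinv_laplacian(1,2)[OF wg cg] PL
          centering_mat_mult[OF pinv_laplacian(4)[OF wg cg]] transpose_centering_mat Pb
          nz[unfolded s_def X_def]])
  have wg': "weighted_graph (add_edge w u v c)" and cg': "connected_graph (add_edge w u v c)"
    using assms by (simp_all add: weighted_graph_add_edge connected_graph_add_edge)
  show ?thesis
    unfolding Let_def node_resistance_eq[OF wg cg] node_resistance_eq[OF wg' cg'] upd
      X_def[symmetric] b_def[symmetric] s_def[symmetric]
    by (simp add: trace_sub trace_scaleR algebra_simps add_divide_distrib)
qed

end
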